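(* For every integer $k\geq 1$, the following identity of formal power series in $q$ holds: \[ \sum_{n\geq 0} b(n,k)\, q^n=\frac{1}{1-q}\left(\sum_{t\geq 1} q^{\binom{t}{2}k^2}\,\frac{1-q^{tk^2}}{1-q^{tk}}-1\right). \]
   Context: A partition $\lambda=(\lambda_1\geq\lambda_2\geq\cdots\geq\lambda_r>0)$ of $n$ is identified with its Young diagram. For a cell $u$ of the Young diagram, the hook length $h_u(\lambda)$ is the number of cells $v$ of the diagram with $v=u$, or $v$ below $u$ in the same column, or $v$ to the right of $u$ in the same row. For $k\geq 1$, $\alpha_k(\lambda)$ denotes the number of cells of the Young diagram of $\lambda$ whose hook length equals $k$ (the number of $k$-hooks of $\lambda$). Let $P(n)$ be the set of partitions of $n$ (with $P(0)$ containing only the empty partition), and $b(n,k)=\max\{\alpha_k(\lambda)\colon \lambda\in P(n)\}$. *)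

theory Defs
  imports "HOL-Computational_Algebra.Formal_Power_Series"
begin

definition is_partition :: "nat list \<Rightarrow> nat \<Rightarrow> bool" where
  "is_partition lam n \<longleftrightarrow> sorted_wrt (\<ge>) lam \<and> (\<forall>x\<in>set lam. x > 0) \<and> sum_list lam = n"

definition partitions :: "nat \<Rightarrow> nat list set" where
  "partitions n = {lam. is_partition lam n}"

text \<open>Young diagram: cell (i,j) = row i, column j (0-based), English convention.\<close>
definition young_diagram :: "nat list \<Rightarrow> (nat \<times> nat) set" where
  "young_diagram lam = {(i, j). i < length lam \<and> j < lam ! i}"

definition hook_length :: "nat list \<Rightarrow> nat \<times> nat \<Rightarrow> nat" where
  "hook_length lam u = card {v \<in> young_diagram lam.
      v = u \<or> (snd v = snd u \<and> fst v > fst u) \<or> (fst v = fst u \<and> snd v > snd u)}"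

definition num_hooks :: "nat \<Rightarrow> nat list \<Rightarrow> nat" where
  "num_hooks k lam = card {u \<in> young_diagram lam. hook_length lam u = k}"

definition b :: "nat \<Rightarrow> nat \<Rightarrow> nat" where
  "b n k = Max (num_hooks k ` partitions n)"

end

theory Submission
  imports Defs
begin

unbundle fps_syntax

text \<open>A partition with l parts is encoded by its beta-set B = {lam_i + (l - 1 - i)}, whose
  sum exceeds |lam| by l choose 2; the hooks of length k correspond to the x in B with
  x - k not in B.  On a k-runner abacus, a runner with m beads admitting g unit moves has
  bead sum at least (m choose 2) + (g + 1 choose 2), and convexity of the latter in g shows
  that c hooks of length k force |lam| >= F(c) = k * sum_{i<c} (i div k + 1); balanced
  abaci attain this bound with any prescribed surplus.  Hence b(n,k) = #{c >= 1. F(c) <= n}.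
  Finally F((t-1)k + j) = (t choose 2) k^2 + t k j for j < k, so the t-th summand of the
  series is sum_{j<k} q^F((t-1)k+j), and summing over t gives sum_c q^F(c).\<close>

definition tri :: "nat \<Rightarrow> nat" where
  "tri n = (\<Sum>i<n. i)"

lemma tri_0 [simp]: "tri 0 = 0"
  by (simp add: tri_def)

lemma tri_Suc [simp]: "tri (Suc n) = tri n + n"
  by (simp add: tri_def)

lemma tri_add: "tri (m + n) = tri m + m * n + tri n"
  by (induction n) (auto simp: algebra_simps)

lemma tri_mult: "tri (k * m) = k * k * tri m + m * tri k"
proof (induction m)
  case (Suc m)
  have "tri (k * Suc m) = tri (k * m) + k * m * k + tri k"
    using tri_add[of "k * m" k] by (simp add: algebra_simps)
  then show ?case using Suc by (simp add: algebra_simps)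
qed simp

lemma tri_eq_choose_2: "tri n = n choose 2"
proof (induction n)
  case (Suc n)
  have "Suc n choose 2 = (n choose 1) + (n choose 2)"
    by (metis Suc_1 choose_reduce_nat nat.distinct(1) diff_Suc_1 zero_less_Suc)
  then show ?case using Suc by simp
qed simp

lemma tri_le_square: "tri n \<le> n * n"
proof -
  have "2 * tri n + n = n * n"
    by (induction n) (auto simp: algebra_simps)
  then show ?thesis by linarith
qed

lemma sum_lessThan_tri: "\<Sum>{..<n} = tri n"
  by (simp add: tri_def)

lemma sum_lessThan_add: "(\<Sum>i<m + (n::nat). f i) = (\<Sum>i<m. f i) + (\<Sum>i<n. f (m + i))"
  by (induction n) (auto simp: algebra_simps)

lemma sum_lessThan_if_less:
  "j \<le> k \<Longrightarrow> (\<Sum>r<k. if r < j then x else y) = j * x + (k - j) * (y :: nat)"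
proof (induction k)
  case (Suc k)
  show ?case
  proof (cases "j \<le> k")
    case True
    then show ?thesis using Suc by (simp add: Suc_diff_le)
  next
    case False
    then have "j = Suc k" using Suc.prems by simp
    then have "(\<Sum>r<Suc k. if r < j then x else y) = (\<Sum>r<Suc k. x)"
      by (intro sum.cong) auto
    then show ?thesis using \<open>j = Suc k\<close> by simp
  qed
qed simp

text \<open>Tangent-line inequality expressing the convexity of \<open>x \<mapsto> tri (x + 1)\<close> at the integer q.\<close>
lemma tri_Suc_tangent: "tri (q + 1) + (q + 1) * x \<le> tri (x + 1) + (q + 1) * q"
proof (cases "x \<le> q")
  case True
  then obtain d where q: "q = x + d" using le_Suc_ex by blast
  have "tri (q + 1) = tri (x + 1) + (x + 1) * d + tri d"
    unfolding q using tri_add[of "x + 1" d] by (simp add: algebra_simps)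
  then show ?thesis unfolding q using tri_le_square[of d] by (simp add: algebra_simps)
next
  case False
  then obtain d where x: "x = q + 1 + d" using le_Suc_ex[of "q + 1" x] by auto
  have "tri (x + 1) = tri (q + 1) + (q + 1) * (d + 1) + tri (d + 1)"
    unfolding x using tri_add[of "q + 1" "d + 1"] by (simp add: algebra_simps)
  then show ?thesis unfolding x by (simp add: algebra_simps)
qed

subsection \<open>The minimal size of a partition with c hooks of length k\<close>

definition level_sum :: "nat \<Rightarrow> nat \<Rightarrow> nat" where
  "level_sum k c = (\<Sum>i<c. i div k + 1)"

definition min_size :: "nat \<Rightarrow> nat \<Rightarrow> nat" where
  "min_size k c = k * level_sum k c"

lemma level_sum_mult: "k \<ge> 1 \<Longrightarrow> level_sum k (q * k) = k * tri (q + 1)"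
proof (induction q)
  case (Suc q)
  have "level_sum k (Suc q * k) = level_sum k (q * k) + (\<Sum>i<k. (q * k + i) div k + 1)"
    unfolding level_sum_def using sum_lessThan_add[of "\<lambda>i. i div k + 1" "q * k" k]
    by (simp add: add.commute)
  also have "(\<Sum>i<k. (q * k + i) div k + 1) = (\<Sum>i<k. q + 1)"
    using Suc.prems by (intro sum.cong) auto
  finally show ?case using Suc by (simp add: algebra_simps)
qed (simp add: level_sum_def)

lemma level_sum_eq:
  assumes "k \<ge> 1" "j \<le> k"
  shows "level_sum k (q * k + j) = k * tri (q + 1) + j * (q + 1)"
proof -
  have "level_sum k (q * k + j) = level_sum k (q * k) + (\<Sum>i<j. (q * k + i) div k + 1)"
    unfolding level_sum_def by (simp add: sum_lessThan_add)
  also have "(\<Sum>i<j. (q * k + i) div k + 1) = (\<Sum>i<j. q + 1)"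
    using assms by (intro sum.cong) auto
  finally show ?thesis using level_sum_mult[OF assms(1)] by simp
qed

lemma min_size_eq:
  assumes "k \<ge> 1" "j \<le> k"
  shows "min_size k (q * k + j) = k * (k * tri (q + 1) + j * (q + 1))"
  using level_sum_eq[OF assms] by (simp add: min_size_def)

lemma min_size_block:
  assumes "k \<ge> 1" "t \<ge> 1" "j < k"
  shows "min_size k ((t - 1) * k + j) = (t choose 2) * k\<^sup>2 + t * k * j"
  using min_size_eq[OF assms(1), of j "t - 1"] assms
  by (simp add: tri_eq_choose_2 power2_eq_square algebra_simps)

lemma min_size_0 [simp]: "min_size k 0 = 0"
  by (simp add: min_size_def level_sum_def)

lemma min_size_mono: "c \<le> c' \<Longrightarrow> min_size k c \<le> min_size k c'"
  unfolding min_size_def level_sum_def by (simp add: sum_mono2)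

lemma min_size_ge:
  assumes "k \<ge> 1"
  shows "c \<le> min_size k c"
proof -
  have "c = (\<Sum>i<c. 1::nat)" by simp
  also have "\<dots> \<le> level_sum k c" unfolding level_sum_def by (rule sum_mono) simp
  also have "\<dots> \<le> min_size k c" unfolding min_size_def using assms by simp
  finally show ?thesis .
qed

lemma level_sum_le_sum_tri:
  assumes "k \<ge> 1"
  shows "level_sum k (\<Sum>r<k. c r) \<le> (\<Sum>r<k. tri (c r + 1))"
proof -
  define s where "s = (\<Sum>r<k. c r)"
  define q where "q = s div k"
  define j where "j = s mod k"
  have s: "s = q * k + j" unfolding q_def j_def by simp
  have "j \<le> k" unfolding j_def using assms by (simp add: less_imp_le)
  then have level: "level_sum k s = k * tri (q + 1) + j * (q + 1)"
    using level_sum_eq[OF assms] s by simp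
  have "(\<Sum>r<k. tri (q + 1) + (q + 1) * c r) \<le> (\<Sum>r<k. tri (c r + 1) + (q + 1) * q)"
    by (rule sum_mono) (rule tri_Suc_tangent)
  then have "k * tri (q + 1) + (q + 1) * s \<le> (\<Sum>r<k. tri (c r + 1)) + k * ((q + 1) * q)"
    by (simp add: sum.distrib sum_distrib_left s_def)
  then show ?thesis using level unfolding s_def[symmetric] s by (simp add: algebra_simps)
qed

lemma finite_min_size_le: "k \<ge> 1 \<Longrightarrow> finite {c. 1 \<le> c \<and> min_size k c \<le> n}"
  by (rule finite_subset[of _ "{..n}"]) (auto intro: le_trans[OF min_size_ge])

subsection \<open>Beads movable by k on an abacus\<close>

definition movable :: "nat \<Rightarrow> nat set \<Rightarrow> nat" where
  "movable k B = card {x \<in> B. k \<le> x \<and> x - k \<notin> B}"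

definition abacus :: "nat \<Rightarrow> (nat \<Rightarrow> nat set) \<Rightarrow> nat set" where
  "abacus k S = (\<lambda>(r, q). q * k + r) ` (SIGMA r:{..<k}. S r)"

lemma mem_abacus: "k \<ge> 1 \<Longrightarrow> x \<in> abacus k S \<longleftrightarrow> x div k \<in> S (x mod k)"
  unfolding abacus_def
  by (auto intro!: image_eqI[of _ _ "(x mod k, x div k)"])

lemma inj_on_abacus_position:
  fixes k :: nat
  assumes "k \<ge> 1"
  shows "inj_on (\<lambda>(r, q). q * k + r) (SIGMA r:{..<k}. S r)"
proof (rule inj_onI, clarsimp)
  fix r q r' q' assume "r < k" "r' < k" "q * k + r = q' * k + r'"
  then have "(q * k + r) div k = (q' * k + r') div k" "(q * k + r) mod k = (q' * k + r') mod k"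
    by simp_all
  with \<open>r < k\<close> \<open>r' < k\<close> show "r = r' \<and> q = q'" by simp
qed

lemma finite_abacus: "(\<And>r. r < k \<Longrightarrow> finite (S r)) \<Longrightarrow> finite (abacus k S)"
  unfolding abacus_def by (intro finite_imageI finite_SigmaI) auto

lemma card_abacus:
  assumes "k \<ge> 1" "\<And>r. r < k \<Longrightarrow> finite (S r)"
  shows "card (abacus k S) = (\<Sum>r<k. card (S r))"
  unfolding abacus_def using assms
  by (simp add: card_image[OF inj_on_abacus_position[OF assms(1)]] card_SigmaI)

lemma sum_abacus:
  assumes "k \<ge> 1" "\<And>r. r < k \<Longrightarrow> finite (S r)"
  shows "\<Sum>(abacus k S) = (\<Sum>r<k. k * \<Sum>(S r) + r * card (S r))"
proof -
  have "\<Sum>(abacus k S) = (\<Sum>(r, q)\<in>(SIGMA r:{..<k}. S r). q * k + r)"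
    unfolding abacus_def by (rule sum.reindex[OF inj_on_abacus_position[OF assms(1)], unfolded comp_def])
  also have "\<dots> = (\<Sum>r<k. \<Sum>q\<in>S r. q * k + r)"
    using assms by (subst sum.Sigma) auto
  also have "\<dots> = (\<Sum>r<k. k * \<Sum>(S r) + r * card (S r))"
    by (intro sum.cong) (auto simp: sum.distrib sum_distrib_left algebra_simps)
  finally show ?thesis .
qed

lemma sum_compact_abacus:
  "k \<ge> 1 \<Longrightarrow> \<Sum>(abacus k (\<lambda>r. {..<l r})) = (\<Sum>r<k. k * tri (l r) + r * l r)"
  by (subst sum_abacus) (auto simp: sum_lessThan_tri)

text \<open>A bead moves by k on the abacus iff it moves by one level on its runner.\<close>
lemma movable_abacus:
  assumes k: "k \<ge> 1" and fin: "\<And>r. r < k \<Longrightarrow> finite (S r)"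
  shows "movable k (abacus k S) = (\<Sum>r<k. movable 1 (S r))"
proof -
  have "{x \<in> abacus k S. k \<le> x \<and> x - k \<notin> abacus k S}
      = abacus k (\<lambda>r. {q \<in> S r. 1 \<le> q \<and> q - 1 \<notin> S r})"
  proof (rule set_eqI)
    fix x
    show "x \<in> {x \<in> abacus k S. k \<le> x \<and> x - k \<notin> abacus k S}
        \<longleftrightarrow> x \<in> abacus k (\<lambda>r. {q \<in> S r. 1 \<le> q \<and> q - 1 \<notin> S r})"
    proof (cases "k \<le> x")
      case True
      have "(x - k) div k = x div k - 1" "(x - k) mod k = x mod k"
        using True k by (simp_all add: le_div_geq le_mod_geq)
      moreover have "1 \<le> x div k" using div_le_mono[OF True, of k] k by simp
      ultimately show ?thesis using True by (simp add: mem_abacus[OF k])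
    next
      case False
      then show ?thesis by (simp add: mem_abacus[OF k])
    qed
  qed
  then show ?thesis
    unfolding movable_def using fin card_abacus[OF k, of "\<lambda>r. {q \<in> S r. 1 \<le> q \<and> q - 1 \<notin> S r}"]
    by simp
qed

lemma abacus_runners:
  assumes k: "k \<ge> 1" and fin: "finite B"
  shows "B = abacus k (\<lambda>r. {q. q * k + r \<in> B})" and "finite {q. q * k + r \<in> B}"
proof -
  show "B = abacus k (\<lambda>r. {q. q * k + r \<in> B})"
    by (rule set_eqI) (simp add: mem_abacus[OF k] mult.commute)
  have "inj (\<lambda>q. q * k + r)" using k by (intro injI) simp
  then show "finite {q. q * k + r \<in> B}" using finite_vimageI[OF fin] by (simp add: vimage_def)
qed

subsection \<open>A lower bound for the bead sum\<close>

lemma tri_card_le_sum: "finite S \<Longrightarrow> tri (card S) \<le> \<Sum>S"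
proof (induction S rule: finite_linorder_max_induct)
  case (insert M S)
  then have "card S \<le> M" using card_mono[of "{..<M}" S] by fastforce
  moreover have "M \<notin> S" using insert by auto
  ultimately show ?case using insert by simp
qed simp

text \<open>Each movable bead x leaves the hole x - 1 below it, so beads and these holes are
  disjoint in \<open>{..<m}\<close>.\<close>
lemma card_plus_movable_le:
  assumes "finite S" "S \<subseteq> {..<m}"
  shows "card S + movable 1 S \<le> m"
proof -
  define C where "C = {x \<in> S. 1 \<le> x \<and> x - 1 \<notin> S}"
  have "inj_on (\<lambda>x. x - 1) C" unfolding C_def by (intro inj_onI) auto
  then have "card ((\<lambda>x. x - 1) ` C) = movable 1 S"
    unfolding movable_def C_def by (simp add: card_image)
  moreover have "S \<inter> (\<lambda>x. x - 1) ` C = {}" unfolding C_def by auto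
  moreover have "S \<union> (\<lambda>x. x - 1) ` C \<subseteq> {..<m}" using assms(2) unfolding C_def by auto
  ultimately show ?thesis
    using assms(1) card_mono[of "{..<m}" "S \<union> (\<lambda>x. x - 1) ` C"]
    by (simp add: card_Un_disjoint C_def)
qed

lemma movable_insert_max:
  assumes "finite S" "\<forall>x\<in>S. x < M"
  shows "movable 1 (insert M S) = movable 1 S + (if 1 \<le> M \<and> M - 1 \<notin> S then 1 else 0)"
proof -
  let ?C = "\<lambda>S. {x \<in> S. 1 \<le> x \<and> x - 1 \<notin> S}"
  have eq: "?C (insert M S) = (if 1 \<le> M \<and> M - 1 \<notin> S then insert M (?C S) else ?C S)"
    using assms(2) by force
  have "M \<notin> S" using assms(2) by auto
  then show ?thesis unfolding movable_def eq using assms(1) by simp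
qed

lemma tri_card_plus_tri_movable_le_sum:
  "finite S \<Longrightarrow> tri (card S) + tri (movable 1 S + 1) \<le> \<Sum>S"
proof (induction S rule: finite_linorder_max_induct)
  case empty
  then show ?case by (simp add: movable_def)
next
  case (insert M S)
  have M: "M \<notin> S" "S \<subseteq> {..<M}" using insert by auto
  show ?case
  proof (cases "1 \<le> M \<and> M - 1 \<notin> S")
    case True
    have "S \<subseteq> {..<M - 1}"
    proof
      fix x assume "x \<in> S"
      then have "x < M" "x \<noteq> M - 1" using M(2) True by auto
      then show "x \<in> {..<M - 1}" by simp
    qed
    then have "card S + movable 1 S \<le> M - 1"
      using card_plus_movable_le[OF insert(1)] by blast
    moreover have "movable 1 (insert M S) = movable 1 S + 1"
      using movable_insert_max[OF insert(1,2)] True by simp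
    ultimately show ?thesis using insert M True by (simp, linarith)
  next
    case False
    have "card S \<le> M" using card_mono[OF _ M(2)] by simp
    moreover have "movable 1 (insert M S) = movable 1 S"
      using movable_insert_max[OF insert(1,2)] False by simp
    ultimately show ?thesis using insert M by simp
  qed
qed

lemma min_size_movable_le:
  assumes k: "k \<ge> 1" and fin: "finite B"
  shows "min_size k (movable k B) + tri (card B) \<le> \<Sum>B"
proof -
  define S where "S r = {q. q * k + r \<in> B}" for r
  have B: "B = abacus k S" and finS: "\<And>r. finite (S r)"
    unfolding S_def using abacus_runners[OF k fin] by auto
  define l where "l r = card (S r)" for r
  define c where "c r = movable 1 (S r)" for r
  have "(\<Sum>r<k. k * (tri (l r) + tri (c r + 1)) + r * l r) \<le> (\<Sum>r<k. k * \<Sum>(S r) + r * l r)"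
    unfolding l_def c_def
    by (intro sum_mono add_mono mult_le_mono2 tri_card_plus_tri_movable_le_sum finS order_refl)
  also have "\<dots> = \<Sum>B"
    unfolding l_def by (subst B, rule sum_abacus[OF k finS, symmetric])
  finally have sum: "k * (\<Sum>r<k. tri (c r + 1)) + (\<Sum>r<k. k * tri (l r) + r * l r) \<le> \<Sum>B"
    by (simp add: sum.distrib sum_distrib_left algebra_simps)
  define compact where "compact = abacus k (\<lambda>r. {..<l r})"
  have "card compact = card B"
    unfolding compact_def l_def using B card_abacus[OF k finS] card_abacus[OF k, of "\<lambda>r. {..<card (S r)}"]
    by simp
  moreover have "finite compact" unfolding compact_def by (rule finite_abacus) simp
  ultimately have "tri (card B) \<le> (\<Sum>r<k. k * tri (l r) + r * l r)"
    using tri_card_le_sum sum_compact_abacus[OF k] unfolding compact_def by metis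
  moreover have movable: "movable k B = (\<Sum>r<k. c r)"
    unfolding c_def by (subst B) (simp add: movable_abacus[OF k finS])
  have "min_size k (movable k B) \<le> k * (\<Sum>r<k. tri (c r + 1))"
    unfolding min_size_def movable by (intro mult_le_mono2 level_sum_le_sum_tri[OF k])
  ultimately show ?thesis using sum by linarith
qed

subsection \<open>Abaci attaining the bound\<close>

text \<open>A runner with a + c beads: a compact block of a beads followed by c beads with single
  gaps between them, the last one raised by w further levels.\<close>
definition runner_top :: "nat \<Rightarrow> nat \<Rightarrow> nat \<Rightarrow> nat \<Rightarrow> nat" where
  "runner_top a c w i = a + 1 + 2 * i + (if Suc i = c then w else 0)"

definition runner_config :: "nat \<Rightarrow> nat \<Rightarrow> nat \<Rightarrow> nat set" where
  "runner_config a c w = {..<a} \<union> runner_top a c w ` {..<c}"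

lemma strict_mono_on_runner_top: "strict_mono_on {..<c} (runner_top a c w)"
  unfolding runner_top_def by (rule strict_mono_onI) auto

lemma inj_on_runner_top: "inj_on (runner_top a c w) {..<c}"
  by (rule strict_mono_on_imp_inj_on[OF strict_mono_on_runner_top])

lemma runner_top_disjoint: "{..<a} \<inter> runner_top a c w ` {..<c} = {}"
  unfolding runner_top_def by auto

lemma finite_runner_config: "finite (runner_config a c w)"
  unfolding runner_config_def by simp

lemma card_runner_config: "card (runner_config a c w) = a + c"
  unfolding runner_config_def using runner_top_disjoint
  by (simp add: card_Un_disjoint card_image[OF inj_on_runner_top])

lemma sum_runner_config:
  "\<Sum>(runner_config a c w) = tri (a + c) + tri (c + 1) + (if 0 < c then w else 0)"
proof -
  have "(\<Sum>i<c. if Suc i = c then w else 0) = (if 0 < c then w else 0)"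
  proof (cases c)
    case (Suc c')
    then have "(\<Sum>i<c. if Suc i = c then w else 0) = (\<Sum>i<c. if i = c' then w else 0)"
      by (intro sum.cong) auto
    then show ?thesis using Suc by simp
  qed simp
  moreover have "(\<Sum>i<c. a + 1 + 2 * i) = c * (a + 1) + 2 * tri c"
    by (induction c) (simp_all add: algebra_simps)
  moreover have "(\<Sum>i<c. runner_top a c w i)
      = (\<Sum>i<c. a + 1 + 2 * i) + (\<Sum>i<c. if Suc i = c then w else 0)"
    unfolding runner_top_def sum.distrib[symmetric] by (rule sum.cong) auto
  moreover have "\<Sum>(runner_config a c w) = \<Sum>{..<a} + (\<Sum>i<c. runner_top a c w i)"
    unfolding runner_config_def using runner_top_disjoint
    by (simp add: sum.union_disjoint sum.reindex[OF inj_on_runner_top])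
  ultimately show ?thesis by (simp add: sum_lessThan_tri tri_add algebra_simps)
qed

lemma runner_top_pred_notin: "i < c \<Longrightarrow> runner_top a c w i - 1 \<notin> runner_config a c w"
proof
  assume i: "i < c" and "runner_top a c w i - 1 \<in> runner_config a c w"
  then obtain i' where i': "i' < c" "runner_top a c w i' = runner_top a c w i - 1"
    unfolding runner_config_def runner_top_def by auto
  show False
  proof (cases "i' < i")
    case True
    then have "runner_top a c w i' = a + 1 + 2 * i'" using i unfolding runner_top_def by simp
    moreover have "a + 1 + 2 * i \<le> runner_top a c w i" unfolding runner_top_def by simp
    ultimately show False using True i' by linarith
  next
    case False
    then have "runner_top a c w i \<le> runner_top a c w i'"
      using strict_mono_on_leD[OF strict_mono_on_runner_top[of c a w], of i i'] i i'(1) by simp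
    moreover have "1 \<le> runner_top a c w i" unfolding runner_top_def by simp
    ultimately show False using i' by simp
  qed
qed

lemma movable_runner_config_ge: "c \<le> movable 1 (runner_config a c w)"
proof -
  have "runner_top a c w ` {..<c}
      \<subseteq> {x \<in> runner_config a c w. 1 \<le> x \<and> x - 1 \<notin> runner_config a c w}"
  proof
    fix x assume "x \<in> runner_top a c w ` {..<c}"
    then obtain i where i: "i < c" "x = runner_top a c w i" by auto
    then have "x \<in> runner_config a c w" unfolding runner_config_def by blast
    moreover have "1 \<le> x" using i(2) unfolding runner_top_def by simp
    ultimately show "x \<in> {x \<in> runner_config a c w. 1 \<le> x \<and> x - 1 \<notin> runner_config a c w}"
      using runner_top_pred_notin[OF i(1)] i(2) by simp
  qed
  then have "card (runner_top a c w ` {..<c}) \<le> movable 1 (runner_config a c w)"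
    unfolding movable_def by (rule card_mono[rotated]) (simp add: finite_runner_config)
  then show ?thesis by (simp add: card_image[OF inj_on_runner_top])
qed

lemma sum_tri_balanced:
  assumes "j \<le> k"
  shows "(\<Sum>r<k. tri (q + (if r < j then 1 else 0) + 1)) = k * tri (q + 1) + j * (q + 1)"
proof -
  have "(\<Sum>r<k. tri (q + (if r < j then 1 else 0) + 1))
      = (\<Sum>r<k. if r < j then tri (q + 1) + (q + 1) else tri (q + 1))"
    by (intro sum.cong) auto
  also have "\<dots> = j * (tri (q + 1) + (q + 1)) + (k - j) * tri (q + 1)"
    using sum_lessThan_if_less[OF assms] by blast
  moreover obtain m where "k = j + m" using assms le_Suc_ex by blast
  ultimately show ?thesis by (simp add: algebra_simps)
qed

text \<open>The sum of the compact abacus with q + 1 beads on every runner and one more bead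
  on runner r0.\<close>
lemma sum_tri_compact_plus_one:
  assumes "r0 < k"
  shows "(\<Sum>r<k. k * tri (q + 1 + (if r = r0 then 1 else 0)) + r * (q + 1 + (if r = r0 then 1 else 0)))
    = tri (k * (q + 1) + 1) + r0"
proof -
  have "(\<Sum>r<k. k * tri (q + 1 + (if r = r0 then 1 else 0)) + r * (q + 1 + (if r = r0 then 1 else 0)))
      = (\<Sum>r<k. k * tri (q + 1) + (q + 1) * r + (if r = r0 then k * (q + 1) + r else 0))"
    by (intro sum.cong) (auto simp: algebra_simps)
  also have "\<dots> = k * (k * tri (q + 1)) + (q + 1) * tri k + k * (q + 1) + r0"
    using assms by (simp add: sum.distrib sum_distrib_left[symmetric] tri_def)
  finally show ?thesis using tri_mult[of k "q + 1"] by (simp add: algebra_simps)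
qed

text \<open>Runner r gets q + 1 beads (one more on runner \<open>e mod k\<close>, for the residue of the
  surplus e) with q or q + 1 of them movable, balanced so that M beads are movable in
  total; the rest \<open>k * (e div k)\<close> of the surplus raises the top bead of runner 0.\<close>
lemma exists_set_movable_ge:
  assumes k: "k \<ge> 1" and M: "M \<ge> 1" and n: "min_size k M \<le> n"
  shows "\<exists>B. finite B \<and> \<Sum>B = n + tri (card B) \<and> M \<le> movable k B"
proof -
  define q j where "q = M div k" and "j = M mod k"
  define e where "e = n - min_size k M"
  define w r0 where "w = e div k" and "r0 = e mod k"
  define l where "l r = q + 1 + (if r = r0 then 1 else 0)" for r
  define c where "c r = q + (if r < j then 1 else 0)" for r
  define S where "S r = runner_config (l r - c r) (c r) (if r = 0 then w else 0)" for r
  define B where "B = abacus k S"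
  have jk: "j \<le> k" and r0k: "r0 < k" unfolding j_def r0_def using k by simp_all
  have Mqj: "M = q * k + j" unfolding q_def j_def by simp
  have c0: "0 < c 0" using M Mqj unfolding c_def by (cases "0 < j") auto
  have finS: "finite (S r)" for r unfolding S_def by (rule finite_runner_config)
  have cl: "c r \<le> l r" for r unfolding c_def l_def by simp
  have cardS: "card (S r) = l r" for r
    unfolding S_def using cl[of r] by (simp add: card_runner_config)
  have sumS: "\<Sum>(S r) = tri (l r) + tri (c r + 1) + (if r = 0 then w else 0)" for r
    unfolding S_def using sum_runner_config[of "l r - c r" "c r"] cl[of r] c0
    by (cases "r = 0") auto
  have "card B = (\<Sum>r<k. l r)"
    unfolding B_def using card_abacus[OF k finS] cardS by simp
  also have "\<dots> = (\<Sum>r<k. q + 1) + (\<Sum>r<k. if r = r0 then 1 else 0)"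
    unfolding l_def by (rule sum.distrib)
  also have "\<dots> = k * (q + 1) + 1" using r0k by simp
  finally have card: "card B = k * (q + 1) + 1" .
  have "(\<Sum>r<k. c r) \<le> (\<Sum>r<k. movable 1 (S r))"
    unfolding S_def by (intro sum_mono movable_runner_config_ge)
  moreover have "(\<Sum>r<k. c r) = M"
    unfolding c_def Mqj sum.distrib using sum_lessThan_if_less[OF jk, of 1 0] by simp
  ultimately have "M \<le> movable k B" unfolding B_def by (simp add: movable_abacus[OF k finS])
  have "\<Sum>B = (\<Sum>r<k. k * tri (c r + 1) + (if r = 0 then k * w else 0) + (k * tri (l r) + r * l r))"
    unfolding B_def sum_abacus[OF k finS] by (intro sum.cong refl) (simp add: sumS cardS algebra_simps)
  also have "\<dots> = k * (\<Sum>r<k. tri (c r + 1)) + k * w + (\<Sum>r<k. k * tri (l r) + r * l r)"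
    using k by (simp add: sum.distrib sum_distrib_left del: tri_Suc)
  also have "\<dots> = min_size k M + k * w + r0 + tri (card B)"
    unfolding c_def l_def card sum_tri_balanced[OF jk] sum_tri_compact_plus_one[OF r0k]
    using min_size_eq[OF k jk, of q] Mqj by simp
  also have "min_size k M + k * w + r0 = n" unfolding w_def r0_def e_def using n by simp
  finally show ?thesis using \<open>M \<le> movable k B\<close> finite_abacus[of k S] finS unfolding B_def by blast
qed

subsection \<open>Beta-sets of partitions\<close>

definition beta_number :: "nat list \<Rightarrow> nat \<Rightarrow> nat" where
  "beta_number lam i = lam ! i + (length lam - 1 - i)"

definition beta_set :: "nat list \<Rightarrow> nat set" where
  "beta_set lam = beta_number lam ` {..<length lam}"

definition col_length :: "nat list \<Rightarrow> nat \<Rightarrow> nat" where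
  "col_length lam j = card {i. i < length lam \<and> j < lam ! i}"

text \<open>The gap of the beta-set belonging to column j: the cell (i, j) has hook length
  \<open>beta_number lam i - gap_number lam j\<close>.\<close>
definition gap_number :: "nat list \<Rightarrow> nat \<Rightarrow> nat" where
  "gap_number lam j = j + length lam - col_length lam j"

lemma downward_closed_eq_lessThan:
  assumes "finite S" "\<And>i i'. i' \<in> S \<Longrightarrow> i \<le> i' \<Longrightarrow> i \<in> S"
  shows "S = {..<card S}"
proof (cases "S = {}")
  case False
  have "S = {..Max S}"
  proof
    show "S \<subseteq> {..Max S}" using assms(1) by (auto intro: Max_ge)
    show "{..Max S} \<subseteq> S" using assms(2)[OF Max_in[OF assms(1) False]] by auto
  qed
  then show ?thesis by (metis card_atMost lessThan_Suc_atMost)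
qed simp

lemma sorted_wrt_ge_nth_antimono:
  assumes "sorted_wrt (\<ge>) (xs :: nat list)" "i \<le> i'" "i' < length xs"
  shows "xs ! i' \<le> xs ! i"
  using sorted_wrt_nth_less[OF assms(1), of i i'] assms(2,3) by (cases "i = i'") auto

context
  fixes lam :: "nat list"
  assumes sorted: "sorted_wrt (\<ge>) lam"
begin

lemma col_length_iff: "i < length lam \<Longrightarrow> j < lam ! i \<longleftrightarrow> i < col_length lam j"
proof -
  have "{i. i < length lam \<and> j < lam ! i} = {..<col_length lam j}"
    unfolding col_length_def
  proof (rule downward_closed_eq_lessThan)
    fix i i' assume "i' \<in> {i. i < length lam \<and> j < lam ! i}" "i \<le> i'"
    then show "i \<in> {i. i < length lam \<and> j < lam ! i}"
      using sorted_wrt_ge_nth_antimono[OF sorted, of i i'] by auto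
  qed simp
  then show "i < length lam \<Longrightarrow> j < lam ! i \<longleftrightarrow> i < col_length lam j" by blast
qed

lemma col_length_le: "col_length lam j \<le> length lam"
  unfolding col_length_def by (rule order_trans[OF card_mono[of "{..<length lam}"]]) auto

lemma col_length_antimono: "j \<le> j' \<Longrightarrow> col_length lam j' \<le> col_length lam j"
  unfolding col_length_def by (rule card_mono) auto

lemma beta_number_strict_antimono:
  "i < i' \<Longrightarrow> i' < length lam \<Longrightarrow> beta_number lam i' < beta_number lam i"
  unfolding beta_number_def using sorted_wrt_ge_nth_antimono[OF sorted, of i i'] by simp

lemma inj_on_beta_number: "inj_on (beta_number lam) {..<length lam}"
proof (rule inj_onI)
  fix i i' assume "i \<in> {..<length lam}" "i' \<in> {..<length lam}"
    "beta_number lam i = beta_number lam i'"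
  then show "i = i'"
    using beta_number_strict_antimono[of i i'] beta_number_strict_antimono[of i' i]
    by (cases i i' rule: linorder_cases) auto
qed

lemma card_beta_set: "card (beta_set lam) = length lam"
  unfolding beta_set_def by (simp add: card_image[OF inj_on_beta_number])

lemma hook_length_add_gap_number:
  assumes cell: "i < length lam" "j < lam ! i"
  shows "hook_length lam (i, j) + gap_number lam j = beta_number lam i"
proof -
  have ic: "i < col_length lam j" using col_length_iff cell by simp
  let ?below = "(\<lambda>i'. (i', j)) ` {i<..<col_length lam j}"
  let ?right = "(\<lambda>j'. (i, j')) ` {j<..<lam ! i}"
  have hook: "{v \<in> young_diagram lam. v = (i, j) \<or> (snd v = j \<and> fst v > i) \<or> (fst v = i \<and> snd v > j)}
      = insert (i, j) (?below \<union> ?right)"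
    using cell ic col_length_iff col_length_le[of j] by (auto simp: young_diagram_def)
  have "hook_length lam (i, j) = Suc (card (?below \<union> ?right))"
    unfolding hook_length_def fst_conv snd_conv hook by (subst card_insert_disjoint) auto
  also have "card (?below \<union> ?right) = card ?below + card ?right"
    by (rule card_Un_disjoint) auto
  also have "card ?below = col_length lam j - Suc i"
    by (subst card_image) (auto simp: inj_on_def)
  also have "card ?right = lam ! i - Suc j"
    by (subst card_image) (auto simp: inj_on_def)
  finally show ?thesis
    unfolding beta_number_def gap_number_def using ic cell col_length_le[of j] by simp
qed

lemma gap_number_notin_beta_set: "gap_number lam j \<notin> beta_set lam"
proof
  assume "gap_number lam j \<in> beta_set lam"
  then obtain i where i: "i < length lam" "gap_number lam j = beta_number lam i"
    by (auto simp: beta_set_def)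
  show False
  proof (cases "i < col_length lam j")
    case True
    then have "j < lam ! i" using col_length_iff i(1) by simp
    then show False using i True col_length_le[of j]
      unfolding beta_number_def gap_number_def by linarith
  next
    case False
    then have "lam ! i \<le> j" using col_length_iff[OF i(1), of j] by (meson not_less)
    then show False using i False col_length_le[of j]
      unfolding beta_number_def gap_number_def by linarith
  qed
qed

lemma gap_number_strict_mono: "strict_mono (gap_number lam)"
proof (rule strict_monoI)
  fix j j' :: nat assume "j < j'"
  then show "gap_number lam j < gap_number lam j'"
    using col_length_antimono[of j j'] col_length_le[of j] col_length_le[of j']
    unfolding gap_number_def by linarith
qed

lemma gap_number_less_beta_number:
  assumes "i < length lam" "j < lam ! i"
  shows "gap_number lam j < beta_number lam i"
  using assms col_length_iff[OF assms(1), of j] col_length_le[of j]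
  unfolding gap_number_def beta_number_def by linarith

lemma gap_number_image_row:
  assumes i: "i < length lam"
  shows "gap_number lam ` {..<lam ! i} = {x. x < beta_number lam i \<and> x \<notin> beta_set lam}"
proof (rule card_subset_eq)
  let ?T = "{x. x < beta_number lam i \<and> x \<notin> beta_set lam}"
  show "finite ?T" by simp
  show "gap_number lam ` {..<lam ! i} \<subseteq> ?T"
    using gap_number_less_beta_number[OF i] gap_number_notin_beta_set by auto
  have "beta_number lam i' < beta_number lam i \<longleftrightarrow> i < i'" if "i' < length lam" for i'
    using beta_number_strict_antimono[of i i'] beta_number_strict_antimono[of i' i] i that
    by (cases i i' rule: linorder_cases) auto
  then have below: "beta_set lam \<inter> {..<beta_number lam i} = beta_number lam ` {i<..<length lam}"
    unfolding beta_set_def by auto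
  have "card (beta_number lam ` {i<..<length lam}) = length lam - 1 - i"
    using inj_on_beta_number by (subst card_image) (auto intro: inj_on_subset)
  moreover have "?T = {..<beta_number lam i} - beta_number lam ` {i<..<length lam}"
    using below by auto
  moreover have "beta_number lam ` {i<..<length lam} \<subseteq> {..<beta_number lam i}"
    using below by auto
  ultimately have "card ?T = beta_number lam i - (length lam - 1 - i)"
    by (simp add: card_Diff_subset)
  then have "card ?T = lam ! i" by (simp add: beta_number_def)
  then show "card (gap_number lam ` {..<lam ! i}) = card ?T"
    using strict_mono_imp_inj_on[OF gap_number_strict_mono] by (simp add: card_image)
qed

lemma num_hooks_eq_movable:
  assumes k: "k \<ge> 1"
  shows "num_hooks k lam = movable k (beta_set lam)"
proof -
  let ?hooks = "{u \<in> young_diagram lam. hook_length lam u = k}"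
  have hooks: "?hooks = {(i, j). i < length lam \<and> j < lam ! i
      \<and> gap_number lam j + k = beta_number lam i}"
    using hook_length_add_gap_number by (fastforce simp: young_diagram_def)
  have inj: "inj_on (beta_number lam \<circ> fst) ?hooks"
  proof (rule inj_onI)
    fix u u' assume "u \<in> ?hooks" "u' \<in> ?hooks" "(beta_number lam \<circ> fst) u = (beta_number lam \<circ> fst) u'"
    moreover obtain i j i' j' where u: "u = (i, j)" "u' = (i', j')" by fastforce
    ultimately have "i < length lam" "i' < length lam" "beta_number lam i = beta_number lam i'"
      and eq: "gap_number lam j + k = beta_number lam i" "gap_number lam j' + k = beta_number lam i'"
      unfolding hooks by auto
    then have "i = i'" using inj_onD[OF inj_on_beta_number] by simp
    moreover have "gap_number lam j = gap_number lam j'" using calculation eq by simp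
    ultimately show "u = u'" using strict_mono_eq[OF gap_number_strict_mono] u by simp
  qed
  have image: "(beta_number lam \<circ> fst) ` ?hooks
      = {x \<in> beta_set lam. k \<le> x \<and> x - k \<notin> beta_set lam}"
  proof (rule set_eqI, rule iffI)
    fix x assume "x \<in> (beta_number lam \<circ> fst) ` ?hooks"
    then obtain i j where "(i, j) \<in> ?hooks" and x: "x = beta_number lam i" by auto
    then have i: "i < length lam" and gap: "x = gap_number lam j + k" unfolding hooks by auto
    have "x \<in> beta_set lam" using i x by (simp add: beta_set_def)
    moreover have "x - k \<notin> beta_set lam" using gap gap_number_notin_beta_set[of j] by simp
    ultimately show "x \<in> {x \<in> beta_set lam. k \<le> x \<and> x - k \<notin> beta_set lam}"
      using gap by simp
  next
    fix x assume x: "x \<in> {x \<in> beta_set lam. k \<le> x \<and> x - k \<notin> beta_set lam}"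
    then obtain i where i: "i < length lam" "x = beta_number lam i" by (auto simp: beta_set_def)
    have "x - k \<in> gap_number lam ` {..<lam ! i}"
      unfolding gap_number_image_row[OF i(1)] using x k i(2) by auto
    then obtain j where j: "j < lam ! i" "gap_number lam j = x - k" by auto
    then have "(i, j) \<in> ?hooks" unfolding hooks using i x by auto
    moreover have "x = (beta_number lam \<circ> fst) (i, j)" using i(2) by simp
    ultimately show "x \<in> (beta_number lam \<circ> fst) ` ?hooks" by (rule rev_image_eqI)
  qed
  show ?thesis unfolding num_hooks_def movable_def using card_image[OF inj] image by simp
qed

lemma sum_beta_set: "\<Sum>(beta_set lam) = sum_list lam + tri (length lam)"
proof -
  let ?l = "length lam"
  have "\<Sum>(beta_set lam) = (\<Sum>i<?l. beta_number lam i)"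
    unfolding beta_set_def by (rule sum.reindex_cong[OF inj_on_beta_number]) auto
  also have "\<dots> = (\<Sum>i<?l. lam ! i) + (\<Sum>i<?l. ?l - Suc i)"
    unfolding beta_number_def diff_diff_left Suc_eq_plus1_left by (rule sum.distrib)
  also have "(\<Sum>i<?l. ?l - Suc i) = tri ?l"
    unfolding tri_def by (rule sum.nat_diff_reindex[where g = id, simplified])
  finally show ?thesis by (simp add: sum_list_sum_nth atLeast0LessThan)
qed

end

lemma strict_sorted_nth_add_le:
  assumes "sorted_wrt (>) (xs :: nat list)" "i + d < length xs"
  shows "xs ! (i + d) + d \<le> xs ! i"
  using assms(2)
proof (induction d)
  case (Suc d)
  have "xs ! (i + Suc d) < xs ! (i + d)"
    using sorted_wrt_nth_less[OF assms(1), of "i + d" "i + Suc d"] Suc.prems by simp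
  then show ?case using Suc by simp
qed simp

lemma exists_sorted_beta_set:
  assumes "finite B"
  shows "\<exists>lam. sorted_wrt (\<ge>) lam \<and> beta_set lam = B"
proof -
  define xs where "xs = rev (sorted_list_of_set B)"
  define l where "l = length xs"
  have sorted: "sorted_wrt (>) xs"
    unfolding xs_def sorted_wrt_rev using strict_sorted_list_of_set[of B] by simp
  have lower: "l - 1 - i \<le> xs ! i" if "i < l" for i
  proof -
    have "i + (l - 1 - i) < length xs" using that unfolding l_def by simp
    from strict_sorted_nth_add_le[OF sorted this] show ?thesis by simp
  qed
  define lam where "lam = map (\<lambda>i. xs ! i - (l - 1 - i)) [0..<l]"
  have len: "length lam = l" unfolding lam_def by simp
  have nth: "lam ! i = xs ! i - (l - 1 - i)" if "i < l" for i unfolding lam_def using that by simp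
  have "sorted_wrt (\<ge>) lam"
    unfolding sorted_wrt_iff_nth_less
  proof (intro allI impI)
    fix i j assume ij: "i < j" "j < length lam"
    then have "xs ! j + (j - i) \<le> xs ! i"
      using strict_sorted_nth_add_le[OF sorted, of i "j - i"] len unfolding l_def by simp
    then show "lam ! j \<le> lam ! i" using ij len nth lower[of j] by simp
  qed
  moreover have "beta_set lam = B"
  proof -
    have "beta_number lam i = xs ! i" if "i < l" for i
      unfolding beta_number_def len using nth[OF that] lower[OF that] by simp
    then have "beta_set lam = (\<lambda>i. xs ! i) ` {..<length xs}"
      unfolding beta_set_def len l_def by simp
    also have "\<dots> = set xs" by (auto simp: in_set_conv_nth)
    finally show ?thesis using assms unfolding xs_def by simp
  qed
  ultimately show ?thesis by blast
qed

lemma sorted_wrt_ge_eq_positive_append_zeros: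
  "sorted_wrt (\<ge>) (xs :: nat list) \<Longrightarrow> \<exists>z. xs = filter (\<lambda>x. 0 < x) xs @ replicate z 0"
proof (induction xs)
  case (Cons x xs)
  show ?case
  proof (cases "x = 0")
    case True
    then have "\<forall>y\<in>set (x # xs). y = 0" using Cons.prems by auto
    then have "x # xs = replicate (length (x # xs)) 0" by (simp add: replicate_length_same)
    moreover have "filter (\<lambda>x. 0 < x) (x # xs) = []"
      using \<open>\<forall>y\<in>set (x # xs). y = 0\<close> by (simp add: filter_empty_conv)
    ultimately show ?thesis by (metis append_Nil)
  next
    case False
    obtain z where "xs = filter (\<lambda>x. 0 < x) xs @ replicate z 0" using Cons by auto
    then show ?thesis using False by (intro exI[of _ z]) simp
  qed
qed simp

lemma num_hooks_append_zeros: "num_hooks k (lam @ replicate z 0) = num_hooks k lam"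
proof -
  have "young_diagram (lam @ replicate z 0) = young_diagram lam"
    unfolding young_diagram_def by (auto simp: nth_append split: if_splits)
  then show ?thesis unfolding num_hooks_def hook_length_def by simp
qed

lemma exists_partition_of_beta_set:
  assumes k: "k \<ge> 1" and fin: "finite B"
  shows "\<exists>lam \<in> partitions (\<Sum>B - tri (card B)). num_hooks k lam = movable k B"
proof -
  obtain lam0 where sorted: "sorted_wrt (\<ge>) lam0" and B: "beta_set lam0 = B"
    using exists_sorted_beta_set[OF fin] by blast
  obtain z where z: "lam0 = filter (\<lambda>x. 0 < x) lam0 @ replicate z 0"
    using sorted_wrt_ge_eq_positive_append_zeros[OF sorted] by blast
  define lam where "lam = filter (\<lambda>x. 0 < x) lam0"
  have "num_hooks k lam = movable k B"
    using num_hooks_append_zeros[of k lam z] z num_hooks_eq_movable[OF sorted k] B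
    unfolding lam_def by simp
  moreover have "sum_list lam = \<Sum>B - tri (card B)"
    using arg_cong[OF z, of sum_list] sum_beta_set[OF sorted] card_beta_set[OF sorted] B
    unfolding lam_def by simp
  moreover have "sorted_wrt (\<ge>) lam" unfolding lam_def by (rule sorted_wrt_filter[OF sorted])
  ultimately show ?thesis
    unfolding partitions_def is_partition_def lam_def by auto
qed

subsection \<open>The maximal number of hooks of length k\<close>

lemma finite_partitions: "finite (partitions n)"
proof (rule finite_subset)
  have "length xs \<le> sum_list xs" if "\<forall>x\<in>set xs. (0::nat) < x" for xs
    using that by (induction xs) auto
  then show "partitions n \<subseteq> {xs. set xs \<subseteq> {..n} \<and> length xs \<le> n}"
    unfolding partitions_def is_partition_def using member_le_sum_list by fastforce
  show "finite {xs. set xs \<subseteq> {..n} \<and> length xs \<le> n}" by (rule finite_lists_length_le) simp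
qed

lemma replicate_one_in_partitions: "replicate n 1 \<in> partitions n"
proof -
  have "sorted_wrt (\<ge>) (replicate n (1::nat))" by (induction n) auto
  then show ?thesis unfolding partitions_def is_partition_def by (simp add: sum_list_replicate)
qed

lemma num_hooks_le_card_min_size_le:
  assumes k: "k \<ge> 1" and lam: "lam \<in> partitions n"
  shows "num_hooks k lam \<le> card {c. 1 \<le> c \<and> min_size k c \<le> n}"
proof -
  have sorted: "sorted_wrt (\<ge>) lam" and n: "sum_list lam = n"
    using lam unfolding partitions_def is_partition_def by auto
  have "finite (beta_set lam)" by (simp add: beta_set_def)
  from min_size_movable_le[OF k this] have "min_size k (num_hooks k lam) \<le> n"
    unfolding num_hooks_eq_movable[OF sorted k] sum_beta_set[OF sorted] card_beta_set[OF sorted] n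
    by simp
  then have "{1..num_hooks k lam} \<subseteq> {c. 1 \<le> c \<and> min_size k c \<le> n}"
  proof (intro subsetI)
    fix c assume "c \<in> {1..num_hooks k lam}" "min_size k (num_hooks k lam) \<le> n"
    then show "c \<in> {c. 1 \<le> c \<and> min_size k c \<le> n}"
      using min_size_mono[of c "num_hooks k lam" k] by simp
  qed
  from card_mono[OF finite_min_size_le[OF k] this] show ?thesis by simp
qed

lemma exists_partition_card_min_size_le:
  assumes k: "k \<ge> 1"
  shows "\<exists>lam \<in> partitions n. card {c. 1 \<le> c \<and> min_size k c \<le> n} \<le> num_hooks k lam"
proof (cases "{c. 1 \<le> c \<and> min_size k c \<le> n} = {}")
  case True
  then show ?thesis unfolding True using replicate_one_in_partitions by auto
next
  case False
  define A where "A = {c. 1 \<le> c \<and> min_size k c \<le> n}"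
  have "finite A" unfolding A_def by (rule finite_min_size_le[OF k])
  define M where "M = Max A"
  have "M \<in> A" unfolding M_def using Max_in[OF \<open>finite A\<close>] False A_def by auto
  then have M: "1 \<le> M" "min_size k M \<le> n" unfolding A_def by auto
  have "A \<subseteq> {1..M}" unfolding M_def using Max_ge[OF \<open>finite A\<close>] A_def by auto
  then have "card A \<le> M" using card_mono[of "{1..M}" A] by simp
  obtain B where B: "finite B" "\<Sum>B = n + tri (card B)" "M \<le> movable k B"
    using exists_set_movable_ge[OF k M] by blast
  obtain lam where lam: "lam \<in> partitions n" "num_hooks k lam = movable k B"
    using exists_partition_of_beta_set[OF k B(1)] B(2) by auto
  show ?thesis
    using lam B(3) \<open>card A \<le> M\<close> unfolding A_def by (intro bexI[OF _ lam(1)]) linarith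
qed

lemma b_eq_card_min_size_le:
  assumes "k \<ge> 1"
  shows "b n k = card {c. 1 \<le> c \<and> min_size k c \<le> n}"
proof -
  let ?C = "card {c. 1 \<le> c \<and> min_size k c \<le> n}"
  have fin: "finite (num_hooks k ` partitions n)" using finite_partitions by simp
  have ne: "num_hooks k ` partitions n \<noteq> {}" using replicate_one_in_partitions by blast
  have "Max (num_hooks k ` partitions n) \<le> ?C"
    using num_hooks_le_card_min_size_le[OF assms] by (simp add: Max_le_iff[OF fin ne])
  moreover obtain lam where lam: "lam \<in> partitions n" "?C \<le> num_hooks k lam"
    using exists_partition_card_min_size_le[OF assms] by blast
  have "num_hooks k lam \<le> Max (num_hooks k ` partitions n)"
    using lam(1) by (intro Max_ge[OF fin]) simp
  ultimately show ?thesis unfolding b_def using lam(2) by simp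
qed

subsection \<open>The generating function\<close>

lemma fps_X_power_geometric:
  assumes "m > 0"
  shows "(fps_X ^ a * (1 - fps_X ^ (m * k)) / (1 - fps_X ^ m) :: 'a::field fps)
    = (\<Sum>j<k. fps_X ^ (a + m * j))"
proof -
  define y :: "'a fps" where "y = fps_X ^ m"
  have unit: "(1 - y) $ 0 \<noteq> 0" unfolding y_def using assms by simp
  have "fps_X ^ a * (1 - fps_X ^ (m * k)) = fps_X ^ a * ((1 - y) * (\<Sum>j<k. y ^ j))"
    unfolding y_def by (simp add: power_mult one_diff_power_eq)
  also have "\<dots> = (\<Sum>j<k. fps_X ^ a * y ^ j) * (1 - y)"
    by (simp add: sum_distrib_left sum_distrib_right ac_simps)
  also have "(\<Sum>j<k. fps_X ^ a * y ^ j) = (\<Sum>j<k. fps_X ^ (a + m * j))"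
    unfolding y_def by (simp add: power_add power_mult)
  finally show ?thesis
    unfolding y_def[symmetric] using fps_divide_unit[OF unit] inverse_mult_eq_1'[OF unit]
    by (simp add: mult.assoc)
qed

lemma sum_blocks_eq_sum_lessThan:
  fixes N k :: nat
  shows "(\<Sum>t = 1..N. \<Sum>j<k. f ((t - 1) * k + j)) = (\<Sum>c<N * k. f c)"
proof (induction N)
  case (Suc N)
  have "Suc N * k = N * k + k" by simp
  then have "(\<Sum>c<Suc N * k. f c) = (\<Sum>c<N * k. f c) + (\<Sum>j<k. f (N * k + j))"
    by (simp only: sum_lessThan_add)
  then show ?case using Suc by simp
qed simp

lemma hook_series_term_eq:
  assumes "k \<ge> 1" "t \<ge> 1"
  shows "(fps_X ^ ((t choose 2) * k\<^sup>2) * (1 - fps_X ^ (t * k\<^sup>2)) / (1 - fps_X ^ (t * k)) :: real fps)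
    = (\<Sum>j<k. fps_X ^ min_size k ((t - 1) * k + j))"
proof -
  have "(\<Sum>j<k. fps_X ^ min_size k ((t - 1) * k + j) :: real fps)
      = (\<Sum>j<k. fps_X ^ ((t choose 2) * k\<^sup>2 + t * k * j))"
    using min_size_block[OF assms] by (intro sum.cong) auto
  then show ?thesis using fps_X_power_geometric[of "t * k" "(t choose 2) * k\<^sup>2" k] assms
    by (simp add: power2_eq_square mult.assoc)
qed

lemma nth_sum_fps_X_power_min_size:
  assumes "k \<ge> 1" "n < N"
  shows "(\<Sum>c<N * k. fps_X ^ min_size k c :: real fps) $ n = real (card {c. min_size k c = n})"
proof -
  have "N \<le> N * k" using assms(1) by simp
  then have "c < N * k" if "min_size k c = n" for c
    using min_size_ge[OF assms(1), of c] assms(2) that by linarith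
  then have "{c. min_size k c = n} \<subseteq> {..<N * k}" by blast
  then have "{..<N * k} \<inter> {c. min_size k c = n} = {c. min_size k c = n}" by blast
  then show ?thesis by (simp add: fps_sum_nth sum.If_cases eq_commute[of n])
qed

lemma hook_series_tendsto:
  assumes "k \<ge> 1"
  shows "(\<lambda>N. \<Sum>t = 1..N. fps_X ^ ((t choose 2) * k\<^sup>2) * (1 - fps_X ^ (t * k\<^sup>2)) / (1 - fps_X ^ (t * k)))
    \<longlonglongrightarrow> Abs_fps (\<lambda>n. real (card {c. min_size k c = n}))"
proof (rule tendsto_fpsI)
  fix n
  have "(\<Sum>t = 1..N. fps_X ^ ((t choose 2) * k\<^sup>2) * (1 - fps_X ^ (t * k\<^sup>2)) / (1 - fps_X ^ (t * k)))
      = (\<Sum>c<N * k. fps_X ^ min_size k c :: real fps)" for N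
    by (simp add: hook_series_term_eq[OF assms] sum_blocks_eq_sum_lessThan[symmetric])
  then show "\<forall>\<^sub>F N in sequentially.
      (\<Sum>t = 1..N. fps_X ^ ((t choose 2) * k\<^sup>2) * (1 - fps_X ^ (t * k\<^sup>2)) / (1 - fps_X ^ (t * k))) $ n
      = Abs_fps (\<lambda>n. real (card {c. min_size k c = n})) $ n"
    using nth_sum_fps_X_power_min_size[OF assms]
    by (intro eventually_sequentiallyI[of "Suc n"]) simp
qed

lemma min_size_eq_0_iff: "k \<ge> 1 \<Longrightarrow> min_size k c = 0 \<longleftrightarrow> c = 0"
  using min_size_ge[of k c] by auto

lemma card_min_size_le_Suc:
  assumes "k \<ge> 1"
  shows "card {c. 1 \<le> c \<and> min_size k c \<le> Suc m}
    = card {c. 1 \<le> c \<and> min_size k c \<le> m} + card {c. min_size k c = Suc m}"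
proof -
  have pos: "1 \<le> c" if "min_size k c = Suc m" for c
    using min_size_eq_0_iff[OF assms, of c] that by (cases c) auto
  have "{c. 1 \<le> c \<and> min_size k c \<le> Suc m}
      = {c. 1 \<le> c \<and> min_size k c \<le> m} \<union> {c. min_size k c = Suc m}"
    using pos by (auto simp: le_Suc_eq)
  moreover have "finite {c. min_size k c = Suc m}"
    using pos by (intro finite_subset[OF _ finite_min_size_le[OF assms, of "Suc m"]]) auto
  ultimately show ?thesis
    using finite_min_size_le[OF assms, of m] by (simp add: card_Un_disjoint disjoint_iff)
qed

lemma one_minus_fps_X_times_b_series:
  assumes "k \<ge> 1"
  shows "(1 - fps_X) * Abs_fps (\<lambda>n. real (b n k))
    = Abs_fps (\<lambda>n. real (card {c. min_size k c = n})) - 1"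
proof (rule fps_ext)
  fix n
  have "{c. min_size k c = 0} = {0}" using min_size_eq_0_iff[OF assms] by auto
  moreover have "{c. 1 \<le> c \<and> min_size k c \<le> 0} = {}" using min_size_eq_0_iff[OF assms] by auto
  ultimately show "((1 - fps_X) * Abs_fps (\<lambda>n. real (b n k))) $ n
      = (Abs_fps (\<lambda>n. real (card {c. min_size k c = n})) - 1) $ n"
    using card_min_size_le_Suc[OF assms, of "n - 1"]
    by (cases n) (simp_all add: algebra_simps b_eq_card_min_size_le[OF assms])
qed

theorem theorem1p2:
  fixes k :: nat
  assumes "k \<ge> 1"
  shows "\<exists>T :: real fps.
     (\<lambda>N. \<Sum>t = 1..N. fps_X ^ ((t choose 2) * k^2) * (1 - fps_X ^ (t * k^2)) / (1 - fps_X ^ (t * k)))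
        \<longlonglongrightarrow> T
     \<and> Abs_fps (\<lambda>n. real (b n k)) = (1 / (1 - fps_X)) * (T - 1)"
proof (intro exI conjI)
  define T :: "real fps" where "T = Abs_fps (\<lambda>n. real (card {c. min_size k c = n}))"
  show "(\<lambda>N. \<Sum>t = 1..N. fps_X ^ ((t choose 2) * k^2) * (1 - fps_X ^ (t * k^2)) / (1 - fps_X ^ (t * k)))
      \<longlonglongrightarrow> T"
    unfolding T_def by (rule hook_series_tendsto[OF assms])
  have unit: "(1 - fps_X :: real fps) $ 0 \<noteq> 0" by simp
  show "Abs_fps (\<lambda>n. real (b n k)) = (1 / (1 - fps_X)) * (T - 1)"
    unfolding T_def one_minus_fps_X_times_b_series[OF assms, symmetric]
    using fps_divide_unit[OF unit, of 1] inverse_mult_eq_1[OF unit] by (simp add: mult.assoc[symmetric])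
qed

end
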